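(* Let $\Omega$ be the solution of $\Omega e^\Omega=1$, let $c=\frac{1}{1+e^\Omega}$, and define $g:[0,1]\to[0,1]$ by $g(y)=\frac{c}{1-y}$ for $y<\frac{1-2c}{1-c}$, $g(y)=1-c$ for $\frac{1-2c}{1-c}\le y<1$, and $g(1)=1$. For $\tau,\gamma,\theta\in[0,1]$ let $$F(\tau,\gamma,\theta)=\int_0^\tau g(y)\,dy+\int_0^\gamma g(y)\,dy+(1-\tau)\big(1-\gamma-(1-\theta)g(\theta)\big)+\gamma\int_\tau^1\min\{g(y),1-g(\theta)\}\,dy.$$ Then $F(\tau,\gamma,\theta)\ge\Omega$ for all $\tau\in[0,1]$ and all $0\le\gamma\le\theta\le1$. *)

theory Defs
  imports "HOL-Analysis.Analysis"
begin

definition Omega :: real where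
  "Omega = (THE x. x * exp x = 1)"

definition cc :: real where
  "cc = 1 / (1 + exp Omega)"

definition g :: "real \<Rightarrow> real" where
  "g y = (if y < (1 - 2 * cc) / (1 - cc) then cc / (1 - y)
          else if y < 1 then 1 - cc else 1)"

definition F :: "real \<Rightarrow> real \<Rightarrow> real \<Rightarrow> real" where
  "F \<tau> \<gamma> \<theta> =
     integral {0..\<tau>} g + integral {0..\<gamma>} g
     + (1 - \<tau>) * (1 - \<gamma> - (1 - \<theta>) * g \<theta>)
     + \<gamma> * integral {\<tau>..1} (\<lambda>y. min (g y) (1 - g \<theta>))"

end

theory Submission
  imports Defs
begin

text \<open>
  On \<open>[0, 1 - \<Omega>]\<close> the function \<open>g\<close> is \<open>c/(1-y)\<close> and afterwards the constant \<open>1 - c\<close>,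
  so it has the explicit primitive \<open>G\<close> below. For \<open>\<theta> < 1\<close> one has \<open>(1-\<theta>) g(\<theta>) \<le> c\<close>
  and \<open>min {g(y), 1 - g(\<theta>)} \<ge> c\<close>, hence \<open>F \<ge> G(\<tau>) + G(\<gamma>) + (1-c)(1-\<tau>)(1-\<gamma>)\<close>
  (for \<open>\<theta> = 1\<close> this is immediate). On the logarithmic part, with \<open>u = 1-\<tau>\<close>, \<open>v = 1-\<gamma>\<close>,
  the bound \<open>ln w \<le> w - 1\<close> for \<open>w = uv/\<Omega>\<close> together with \<open>ln \<Omega> = -\<Omega>\<close> and
  \<open>c/\<Omega> = 1 - c\<close> gives exactly \<open>\<Omega>\<close>; moving \<open>\<tau>\<close> or \<open>\<gamma>\<close> past \<open>1 - \<Omega>\<close> only increases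
  the right-hand side.
\<close>

lemma pos_if_mult_exp_eq_1: "x * exp x = 1 \<Longrightarrow> 0 < (x::real)"
proof (rule ccontr)
  assume "x * exp x = 1" "\<not> 0 < x"
  then show False using mult_nonpos_nonneg[of x "exp x"] by simp
qed

lemma Omega_unique_root: "\<exists>!x::real. x * exp x = 1"
proof -
  have "\<exists>x::real. 0 \<le> x \<and> x \<le> 1 \<and> x * exp x = 1"
    by (intro IVT') (auto intro!: continuous_intros)
  moreover have "x = y" if "x * exp x = 1" "y * exp y = 1" for x y :: real
  proof -
    have mono: "u * exp u < v * exp v" if "0 < u" "u < v" for u v :: real
      using that by (intro mult_strict_mono) auto
    show "x = y"
      using mono[of x y] mono[of y x] pos_if_mult_exp_eq_1 that by (cases x y rule: linorder_cases) auto
  qed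
  ultimately show ?thesis by blast
qed

lemma Omega_exp_Omega: "Omega * exp Omega = 1"
  unfolding Omega_def by (rule theI'[OF Omega_unique_root])

lemma Omega_pos: "0 < Omega"
  using Omega_exp_Omega by (rule pos_if_mult_exp_eq_1)

lemma Omega_less_1: "Omega < 1"
proof (rule ccontr)
  assume "\<not> Omega < 1"
  then have "Omega * exp Omega \<ge> 1 * exp 1"
    by (intro mult_mono) auto
  then show False using Omega_exp_Omega by simp
qed

lemma exp_Omega: "exp Omega = 1 / Omega"
  using Omega_exp_Omega Omega_pos by (simp add: field_simps)

lemma ln_Omega: "ln Omega = - Omega"
  using exp_Omega Omega_pos by (metis exp_minus inverse_eq_divide inverse_inverse_eq ln_exp)

lemma cc_eq: "cc = Omega / (1 + Omega)"
  unfolding cc_def exp_Omega using Omega_pos by (simp add: field_simps)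

lemma cc_pos: "0 < cc"
  and cc_less_half: "cc < 1/2"
  and cc_div_Omega: "cc / Omega = 1 - cc"
proof -
  have "0 < Omega + Omega * Omega" using Omega_pos by (simp add: add_pos_pos)
  then show "0 < cc" "cc < 1/2" "cc / Omega = 1 - cc"
    using Omega_pos Omega_less_1 unfolding cc_eq by (auto simp: field_simps)
qed

lemma g_eq: "g y = (if y < 1 - Omega then cc / (1 - y) else if y < 1 then 1 - cc else 1)"
proof -
  have "(1 - 2 * cc) / (1 - cc) = 1 - Omega"
    using Omega_pos unfolding cc_eq by (simp add: field_simps)
  then show ?thesis unfolding g_def by simp
qed

lemma g_nonneg: "0 \<le> g y"
  using cc_pos cc_less_half Omega_pos unfolding g_eq by (auto simp: field_simps)

lemma g_ge_cc: "0 \<le> y \<Longrightarrow> cc \<le> g y"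
  using cc_pos cc_less_half Omega_pos unfolding g_eq by (auto simp: field_simps)

lemma g_le_one_minus_cc: "y < 1 \<Longrightarrow> g y \<le> 1 - cc"
proof (cases "y < 1 - Omega")
  case True
  then have "cc / (1 - y) \<le> cc / Omega"
    using cc_pos Omega_pos by (intro divide_left_mono) auto
  then show ?thesis using True cc_div_Omega unfolding g_eq by simp
qed (auto simp: g_eq)

lemma one_minus_mult_g_le_cc: "\<theta> \<le> 1 \<Longrightarrow> (1 - \<theta>) * g \<theta> \<le> cc"
proof (cases "1 - Omega \<le> \<theta> \<and> \<theta> < 1")
  case True
  then have "(1 - \<theta>) * (1 - cc) \<le> Omega * (1 - cc)"
    using cc_less_half by (intro mult_right_mono) auto
  also have "\<dots> = cc" using cc_div_Omega Omega_pos by (simp add: field_simps)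
  finally show ?thesis using True unfolding g_eq by simp
qed (use Omega_less_1 cc_pos in \<open>auto simp: g_eq\<close>)

definition G :: "real \<Rightarrow> real" where
  "G t = (if t \<le> 1 - Omega then - cc * ln (1 - t)
          else cc * Omega + (1 - cc) * (t - (1 - Omega)))"

lemma G_eq_min: "G t = - cc * ln (1 - min t (1 - Omega)) + (1 - cc) * (t - min t (1 - Omega))"
  using ln_Omega unfolding G_def by (auto simp: algebra_simps min_def)

lemma g_has_integral_log_part: "(g has_integral G t) {0..t}" if "0 \<le> t" "t \<le> 1 - Omega"
proof -
  have "((\<lambda>y. cc / (1 - y)) has_integral (- cc * ln (1 - t)) - (- cc * ln (1 - 0))) {0..t}"
  proof (rule fundamental_theorem_of_calculus)
    fix x assume "x \<in> {0..t}"
    then have "x < 1" using that Omega_pos by auto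
    then show "((\<lambda>y. - cc * ln (1 - y)) has_vector_derivative cc / (1 - x)) (at x within {0..t})"
      unfolding has_real_derivative_iff_has_vector_derivative[symmetric]
      by (auto intro!: derivative_eq_intros simp: field_simps)
  qed (fact that)
  then have "((\<lambda>y. cc / (1 - y)) has_integral G t) {0..t}"
    using that unfolding G_def by simp
  then show ?thesis
    by (rule has_integral_spike_finite[where S="{1 - Omega}", rotated 2])
      (use that in \<open>auto simp: g_eq\<close>)
qed

lemma g_has_integral: "(g has_integral G t) {0..t}" if "0 \<le> t" "t \<le> 1"
proof (cases "t \<le> 1 - Omega")
  case False
  have log_part: "(g has_integral G (1 - Omega)) {0..1 - Omega}"
    using g_has_integral_log_part Omega_less_1 by simp
  have "((\<lambda>y. 1 - cc) has_integral (t - (1 - Omega)) * (1 - cc)) {1 - Omega..t}"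
    using has_integral_const_real[of "1 - cc" "1 - Omega" t] False by simp
  then have const_part: "(g has_integral (t - (1 - Omega)) * (1 - cc)) {1 - Omega..t}"
    by (rule has_integral_spike_finite[where S="{1}", rotated 2]) (use that in \<open>auto simp: g_eq\<close>)
  have "(g has_integral G (1 - Omega) + (t - (1 - Omega)) * (1 - cc)) {0..t}"
    by (rule has_integral_combine[OF _ _ log_part const_part]) (use False Omega_less_1 in auto)
  moreover have "G (1 - Omega) + (t - (1 - Omega)) * (1 - cc) = G t"
    using False ln_Omega unfolding G_def by (simp add: algebra_simps)
  ultimately show ?thesis by simp
qed (use g_has_integral_log_part that in blast)

lemma integral_g: "0 \<le> t \<Longrightarrow> t \<le> 1 \<Longrightarrow> integral {0..t} g = G t"
  using g_has_integral by (rule integral_unique)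

lemma log_bound: "Omega \<le> - cc * ln u - cc * ln v + u * v * (1 - cc)"
  if "0 < u" "0 < v" for u v :: real
proof -
  define w where "w = u * v / Omega"
  have "ln w = ln u + ln v + Omega"
    using that Omega_pos ln_Omega unfolding w_def by (simp add: ln_mult ln_div)
  moreover have "ln w \<le> w - 1"
    using ln_le_minus_one that Omega_pos unfolding w_def by simp
  ultimately have "cc * (ln u + ln v) \<le> cc * (w - 1 - Omega)"
    using cc_pos by (intro mult_left_mono) auto
  moreover have "cc * w = u * v * (1 - cc)"
    unfolding w_def using cc_div_Omega by (metis times_divide_eq_left times_divide_eq_right mult.commute)
  moreover have "cc * (1 + Omega) = Omega"
    using Omega_pos unfolding cc_eq by (simp add: field_simps)
  ultimately show ?thesis by (simp add: algebra_simps)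
qed

lemma G_sum_bound: "Omega \<le> G t + G x + (1 - cc) * (1 - t) * (1 - x)"
  if "0 \<le> t" "t \<le> 1" "0 \<le> x" "x \<le> 1"
proof -
  define t' where "t' = min t (1 - Omega)"
  define x' where "x' = min x (1 - Omega)"
  have t': "0 \<le> t'" "t' < 1" "t' \<le> t" and x': "0 \<le> x'" "x' < 1" "x' \<le> x"
    using that Omega_pos Omega_less_1 unfolding t'_def x'_def by auto
  have "Omega \<le> - cc * ln (1 - t') - cc * ln (1 - x') + (1 - t') * (1 - x') * (1 - cc)"
    using t' x' by (intro log_bound) auto
  moreover have "(1 - t') * (1 - x') \<le> (t - t') + (x - x') + (1 - t) * (1 - x)"
  proof -
    have "0 \<le> (t - t') * x' + (x - x') * t' + (t - t') * (x - x')"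
      using t' x' by simp
    then show ?thesis by (simp add: algebra_simps)
  qed
  then have "(1 - cc) * ((1 - t') * (1 - x'))
      \<le> (1 - cc) * ((t - t') + (x - x') + (1 - t) * (1 - x))"
    using cc_less_half by (intro mult_left_mono) auto
  ultimately show ?thesis
    unfolding G_eq_min[of t] G_eq_min[of x] t'_def[symmetric] x'_def[symmetric]
    by (simp add: algebra_simps)
qed

lemma integral_min_g_ge: "cc * (1 - \<tau>) \<le> integral {\<tau>..1} (\<lambda>y. min (g y) k)"
  if "0 \<le> \<tau>" "\<tau> \<le> 1" "cc \<le> k"
proof -
  have "g integrable_on {\<tau>..1}"
    using g_has_integral[of 1] that by (auto intro: integrable_subinterval_real)
  then have "g absolutely_integrable_on {\<tau>..1}"
    by (rule nonnegative_absolutely_integrable_1) (simp add: g_nonneg)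
  moreover have "(\<lambda>y. k) absolutely_integrable_on {\<tau>..1}"
    using cc_pos that by (intro nonnegative_absolutely_integrable_1) auto
  ultimately have "(\<lambda>y. min (g y) k) integrable_on {\<tau>..1}"
    using absolutely_integrable_min_1 set_lebesgue_integral_eq_integral(1) by blast
  then have "integral {\<tau>..1} (\<lambda>y. cc) \<le> integral {\<tau>..1} (\<lambda>y. min (g y) k)"
    by (intro integral_le) (use g_ge_cc that in auto)
  then show ?thesis using that by (simp add: mult.commute)
qed

lemma F_ge_G_bound: "G \<tau> + G \<gamma> + (1 - cc) * (1 - \<tau>) * (1 - \<gamma>) \<le> F \<tau> \<gamma> \<theta>"
  if "0 \<le> \<tau>" "\<tau> \<le> 1" "0 \<le> \<gamma>" "\<gamma> \<le> \<theta>" "\<theta> \<le> 1"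
proof (cases "\<theta> < 1")
  case True
  have "(1 - \<tau>) * (1 - \<gamma> - cc) + \<gamma> * (cc * (1 - \<tau>))
      \<le> (1 - \<tau>) * (1 - \<gamma> - (1 - \<theta>) * g \<theta>)
        + \<gamma> * integral {\<tau>..1} (\<lambda>y. min (g y) (1 - g \<theta>))"
    using that one_minus_mult_g_le_cc g_le_one_minus_cc[OF True]
    by (intro add_mono mult_left_mono integral_min_g_ge) auto
  then show ?thesis
    using that unfolding F_def by (simp add: integral_g algebra_simps)
next
  case False
  then have "\<theta> = 1" using that by simp
  moreover have "g 1 = 1" unfolding g_eq using Omega_pos by simp
  ultimately have "(\<lambda>y. min (g y) (1 - g \<theta>)) = (\<lambda>y. 0)"
    using g_nonneg by (simp add: min_absorb2)
  moreover have "(1 - cc) * ((1 - \<tau>) * (1 - \<gamma>)) \<le> (1 - \<tau>) * (1 - \<gamma>)"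
    using that cc_pos cc_less_half by (intro mult_left_le_one_le) auto
  ultimately show ?thesis
    using that \<open>\<theta> = 1\<close> unfolding F_def by (simp add: integral_g)
qed

theorem mainTheorem12:
  fixes \<tau> \<gamma> \<theta> :: real
  assumes "0 \<le> \<tau>" "\<tau> \<le> 1" "0 \<le> \<gamma>" "\<gamma> \<le> \<theta>" "\<theta> \<le> 1"
  shows "F \<tau> \<gamma> \<theta> \<ge> Omega"
  using G_sum_bound[of \<tau> \<gamma>] F_ge_G_bound[of \<tau> \<gamma> \<theta>] assms by linarith

end
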